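(* Let $\alpha\in[0,\pi/2)$, $A,B\in\Pi^n_{s,\alpha}$ and $q\in\mathbb{C}$ with $0<|q|\le1$. Then \[ |q|\,w_q(AB\pm BA)\le 2\sec(\alpha)\min\{w_q(A)\|B\|,\ w_q(B)\|A\|\}. \]
   Context: $M_n$ is the algebra of complex $n\times n$ matrices with the operator norm $\|\cdot\|$. For $|q|\le1$, $w_q(A)=\sup\{|\langle Ax,y\rangle|: \|x\|=\|y\|=1,\ \langle x,y\rangle=q\}$. $W(A)=\{\langle Ax,x\rangle:\|x\|=1\}$, $S_\alpha=\{z:\operatorname{Re}z>0,\ |\operatorname{Im}z|\le\tan(\alpha)\operatorname{Re}z\}$ and $\Pi^n_{s,\alpha}=\{A\in M_n: W(A)\subseteq S_\alpha\}$. *)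

theory Defs
  imports "HOL-Analysis.Analysis"
begin

text \<open>Complex n x n matrices are rendered as complex ^'n ^'n (dimension n = CARD('n)).
  The standard complex inner product, linear in the first argument.\<close>

definition cinner :: "complex ^'n \<Rightarrow> complex ^'n \<Rightarrow> complex" where
  "cinner x y = (\<Sum>i\<in>UNIV. x $ i * cnj (y $ i))"

definition opnorm :: "complex ^'n ^'n \<Rightarrow> real" where
  "opnorm A = onorm (\<lambda>x. A *v x)"

definition qnumrad :: "complex \<Rightarrow> complex ^'n ^'n \<Rightarrow> real" where
  "qnumrad q A = Sup {cmod (cinner (A *v x) y) | x y.
      norm x = 1 \<and> norm y = 1 \<and> cinner x y = q}"

definition numrange :: "complex ^'n ^'n \<Rightarrow> complex set" where
  "numrange A = {cinner (A *v x) x | x. norm x = 1}"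

definition sector :: "real \<Rightarrow> complex set" where
  "sector \<alpha> = {z. Re z > 0 \<and> \<bar>Im z\<bar> \<le> tan \<alpha> * Re z}"

definition Pi_s :: "real \<Rightarrow> (complex ^'n ^'n) set" where
  "Pi_s \<alpha> = {A. numrange A \<subseteq> sector \<alpha>}"

end

theory Submission
  imports Defs
begin

(* If W(A) lies in the sector S_alpha, then <A(x + l y), x + l y> lies in S_alpha or is 0 for
   every unimodular l; testing this expression against the boundary rays of the dual cone gives
   2 cos(alpha) |<Ax,y>| <= Re <Ax,x> + Re <Ay,y>.  Taking y = Ax/||Ax|| and using
   |q| |<Ax,x>| <= w_q(A) (valid once n >= 2) yields |q| cos(alpha) ||A|| <= w_q(A).  The
   corollary follows from w_q(C) <= ||C|| and ||AB +- BA|| <= 2 ||A|| ||B||. *)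

lemma cinner_add_left: "cinner (x + y) z = cinner x z + cinner y z"
  unfolding cinner_def by (simp add: sum.distrib distrib_right)

lemma cinner_add_right: "cinner x (y + z) = cinner x y + cinner x z"
  unfolding cinner_def by (simp add: sum.distrib distrib_left)

lemma cinner_diff_right: "cinner x (y - z) = cinner x y - cinner x z"
  unfolding cinner_def by (simp add: sum_subtractf right_diff_distrib)

lemma cinner_minus_right: "cinner x (- y) = - cinner x y"
  unfolding cinner_def by (simp add: sum_negf)

lemma cinner_scale_left: "cinner (c *s x) y = c * cinner x y"
  unfolding cinner_def by (simp add: sum_distrib_left mult.assoc)

lemma cinner_scale_right: "cinner x (c *s y) = cnj c * cinner x y"
  unfolding cinner_def by (simp add: sum_distrib_left mult.left_commute)

lemma cinner_scaleR_left: "cinner (r *\<^sub>R x) y = of_real r * cinner x y"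
  unfolding cinner_def vector_scaleR_component
  by (simp add: sum_distrib_left scaleR_conv_of_real mult.assoc)

lemma cinner_scaleR_right: "cinner x (r *\<^sub>R y) = of_real r * cinner x y"
  unfolding cinner_def vector_scaleR_component
  by (simp add: sum_distrib_left scaleR_conv_of_real mult.left_commute)

lemma cinner_zero_left [simp]: "cinner 0 y = 0"
  unfolding cinner_def by simp

lemma Re_cinner: "Re (cinner x y) = inner x y"
  unfolding cinner_def inner_vec_def by (simp add: inner_complex_def)

lemma cinner_self: "cinner x x = of_real ((norm x)\<^sup>2)"
proof -
  have "Im (cinner x x) = 0"
    unfolding cinner_def by (simp add: mult.commute)
  then show ?thesis
    by (simp add: complex_eq_iff Re_cinner power2_norm_eq_inner)
qed

lemma cinner_axis_right: "cinner x (axis i 1) = x $ i"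
  unfolding cinner_def axis_def by (simp add: if_distrib cong: if_cong)

lemma norm_vector_scalar_mult: "norm (c *s x) = cmod c * norm (x :: complex ^'n)"
  unfolding norm_vec_def by (simp add: L2_set_right_distrib norm_mult)

lemma cnj_sgn_mult_self: "cnj (sgn z) * z = of_real (cmod z)"
proof (cases "z = 0")
  case False
  have "cnj (sgn z) * z = cnj z * z / of_real (cmod z)"
    by (simp add: sgn_eq)
  then show ?thesis
    using False by (simp add: mult.commute flip: complex_norm_square) (simp add: power2_eq_square)
qed simp

lemma cinner_cauchy_schwarz: "cmod (cinner x y) \<le> norm x * norm y"
proof -
  let ?c = "cinner x y"
  have "cmod ?c = inner x (sgn ?c *s y)"
    by (simp flip: Re_cinner add: cinner_scale_right cnj_sgn_mult_self)
  also have "\<dots> \<le> norm x * norm (sgn ?c *s y)"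
    by (rule norm_cauchy_schwarz)
  also have "\<dots> \<le> norm x * norm y"
    by (simp add: norm_vector_scalar_mult norm_sgn mult_left_le)
  finally show ?thesis .
qed

lemma exists_unit_orthogonal:
  fixes x :: "complex ^'n"
  assumes "CARD('n) \<ge> 2"
  obtains z where "norm z = 1" "cinner x z = 0"
proof -
  obtain i j :: 'n where "i \<noteq> j"
    using assms card_le_Suc0_iff_eq[of "UNIV :: 'n set"] by fastforce
  define w where "w = cnj (x $ j) *s axis i 1 - cnj (x $ i) *s axis j 1"
  have "cinner x w = 0"
    by (simp add: w_def cinner_diff_right cinner_scale_right cinner_axis_right)
  show thesis
  proof (cases "w = 0")
    case True
    then have "x $ i = 0"
      using \<open>i \<noteq> j\<close> by (auto simp: w_def vec_eq_iff axis_def dest: spec[of _ j])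
    then show thesis
      using that[of "axis i 1"] by (simp add: cinner_axis_right)
  next
    case False
    then show thesis
      using that[of "sgn w"] \<open>cinner x w = 0\<close>
      by (simp add: norm_sgn sgn_vec_def cinner_scaleR_right)
  qed
qed

lemma norm_matrix_vector_mult_le: "norm (A *v x) \<le> opnorm A * norm x"
  unfolding opnorm_def by (rule onorm[OF matrix_vector_mul_bounded_linear])

lemma opnorm_nonneg: "0 \<le> opnorm A"
  unfolding opnorm_def by (rule onorm_pos_le[OF matrix_vector_mul_bounded_linear])

lemma opnorm_le_if_unit:
  fixes A :: "complex ^'n ^'n"
  assumes "\<And>x. norm x = 1 \<Longrightarrow> norm (A *v x) \<le> b"
  shows "opnorm A \<le> b"
  unfolding opnorm_def
proof (rule onorm_le)
  fix x :: "complex ^'n"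
  show "norm (A *v x) \<le> b * norm x"
  proof (cases "x = 0")
    case False
    have "norm (A *v x) = norm x * norm (A *v sgn x)"
      unfolding sgn_vec_def linear_cmul[OF matrix_vector_mul_linear] using False by simp
    also have "\<dots> \<le> norm x * b"
      using assms[of "sgn x"] False by (simp add: norm_sgn mult_left_mono)
    finally show ?thesis by (simp add: mult.commute)
  qed simp
qed

lemma opnorm_add_le: "opnorm (A + B) \<le> opnorm A + opnorm B"
  unfolding opnorm_def matrix_vector_mult_add_rdistrib
  by (intro onorm_triangle matrix_vector_mul_bounded_linear)

lemma opnorm_diff_le: "opnorm (A - B) \<le> opnorm A + opnorm B"
proof -
  have "onorm (\<lambda>x. A *v x - B *v x) \<le> onorm ((*v) A) + onorm (\<lambda>x. - (B *v x))"
    unfolding diff_conv_add_uminus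
    by (intro onorm_triangle bounded_linear_minus matrix_vector_mul_bounded_linear)
  then show ?thesis
    unfolding opnorm_def matrix_vector_mult_diff_rdistrib onorm_neg .
qed

lemma opnorm_matrix_mul_le: "opnorm (A ** B) \<le> opnorm A * opnorm B"
proof -
  have "onorm ((*v) A \<circ> (*v) B) \<le> onorm ((*v) A) * onorm ((*v) B)"
    by (intro onorm_compose matrix_vector_mul_bounded_linear)
  then show ?thesis
    unfolding opnorm_def o_def matrix_vector_mul_assoc .
qed

lemma unit_with_cinner_eq:
  assumes "norm x = 1" "norm z = 1" "cinner x z = 0" "cmod q \<le> 1"
  defines "y \<equiv> cnj q *s x + sqrt (1 - (cmod q)\<^sup>2) *\<^sub>R z"
  shows "norm y = 1" and "cinner x y = q"
proof -
  have "cinner x x = 1"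
    using assms(1) by (simp add: cinner_self)
  then show "cinner x y = q"
    using assms(3) by (simp add: y_def cinner_add_right cinner_scale_right cinner_scaleR_right)
  have "orthogonal (cnj q *s x) (sqrt (1 - (cmod q)\<^sup>2) *\<^sub>R z)"
    using assms(3)
    by (simp add: orthogonal_def flip: Re_cinner add: cinner_scale_left cinner_scaleR_right)
  then have "(norm y)\<^sup>2
      = (norm (cnj q *s x))\<^sup>2 + (norm (sqrt (1 - (cmod q)\<^sup>2) *\<^sub>R z))\<^sup>2"
    unfolding y_def by (rule norm_add_Pythagorean)
  also have "\<dots> = 1"
    using assms(1,2,4) by (simp add: norm_vector_scalar_mult power_mult_distrib abs_square_le_1)
  finally show "norm y = 1"
    using norm_ge_zero[of y] by (auto simp: power2_eq_1_iff)
qed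

lemma cmod_cinner_matrix_le_opnorm:
  assumes "norm x = 1" "norm y = 1"
  shows "cmod (cinner (M *v x) y) \<le> opnorm M"
  using cinner_cauchy_schwarz[of "M *v x" y] norm_matrix_vector_mult_le[of M x] assms by simp

lemma qnumrad_ge:
  assumes "norm x = 1" "norm y = 1" "cinner x y = q"
  shows "cmod (cinner (M *v x) y) \<le> qnumrad q M"
  unfolding qnumrad_def
  by (intro cSup_upper bdd_aboveI[of _ "opnorm M"])
    (use assms cmod_cinner_matrix_le_opnorm in auto)

lemma qnumrad_le_opnorm:
  fixes M :: "complex ^'n ^'n"
  assumes "CARD('n) \<ge> 2" "cmod q \<le> 1"
  shows "qnumrad q M \<le> opnorm M"
proof -
  obtain x :: "complex ^'n" where x: "norm x = 1"
    using exists_unit_orthogonal[OF assms(1), of 0] by blast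
  obtain z where z: "norm z = 1" "cinner x z = 0"
    using exists_unit_orthogonal[OF assms(1)] by blast
  show ?thesis
    unfolding qnumrad_def
    by (rule cSup_least)
      (use unit_with_cinner_eq[OF x z assms(2)] x cmod_cinner_matrix_le_opnorm in auto)
qed

lemma qnumrad_ge_quadratic_form:
  fixes M :: "complex ^'n ^'n"
  assumes "CARD('n) \<ge> 2" "cmod q \<le> 1" "norm x = 1"
  shows "cmod q * cmod (cinner (M *v x) x) \<le> qnumrad q M"
proof -
  obtain z where z: "norm z = 1" "cinner x z = 0"
    using exists_unit_orthogonal[OF assms(1)] by blast
  define s where "s = sqrt (1 - (cmod q)\<^sup>2)"
  \<comment> \<open>Testing with both z and -z and averaging cancels the cross term.\<close>
  define a where "a = q * cinner (M *v x) x"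
  define b where "b = of_real s * cinner (M *v x) z"
  have "cmod (a + b) \<le> qnumrad q M"
    using qnumrad_ge[OF assms(3) unit_with_cinner_eq[OF assms(3) z assms(2)]]
    by (simp add: a_def b_def s_def cinner_add_right cinner_scale_right cinner_scaleR_right)
  moreover have "cmod (a - b) \<le> qnumrad q M"
    using qnumrad_ge[OF assms(3) unit_with_cinner_eq[OF assms(3) _ _ assms(2)], of "- z"] z
    by (simp add: a_def b_def s_def cinner_add_right cinner_scale_right cinner_scaleR_right
        cinner_diff_right cinner_minus_right)
  moreover have "2 * cmod a \<le> cmod (a + b) + cmod (a - b)"
    using norm_triangle_ineq[of "a + b" "a - b"] by (simp add: norm_mult)
  ultimately show ?thesis
    by (simp add: a_def norm_mult)
qed

text \<open>The condition on w says that w lies in the dual cone of the sector,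
  i.e. \<open>|arg w| \<le> pi/2 - \<alpha>\<close>.\<close>

lemma Re_mult_nonneg_if_in_sector:
  assumes "0 \<le> \<alpha>" "\<alpha> < pi / 2" "\<bar>Im w\<bar> * sin \<alpha> \<le> Re w * cos \<alpha>"
    and "z \<in> insert 0 (sector \<alpha>)"
  shows "0 \<le> Re (w * z)"
proof (cases "z = 0")
  case False
  have cos: "0 < cos \<alpha>" and sin: "0 \<le> sin \<alpha>"
    using assms(1,2) by (auto intro: cos_gt_zero_pi sin_ge_zero)
  have z: "0 < Re z" "cos \<alpha> * \<bar>Im z\<bar> \<le> sin \<alpha> * Re z"
    using False assms(4) cos by (auto simp: sector_def tan_def field_simps)
  have "cos \<alpha> * (Im w * Im z) \<le> \<bar>Im w\<bar> * (cos \<alpha> * \<bar>Im z\<bar>)"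
    using cos by (simp add: mult_left_mono flip: abs_mult)
  also have "\<dots> \<le> \<bar>Im w\<bar> * (sin \<alpha> * Re z)"
    using z(2) by (simp add: mult_left_mono)
  also have "\<dots> \<le> cos \<alpha> * (Re w * Re z)"
    using assms(3) z(1) mult_right_mono by (fastforce simp: algebra_simps)
  finally show ?thesis
    using cos by (simp add: algebra_simps)
qed simp

lemma cmod_le_Re_if_Re_nonneg_on_circle:
  assumes "\<And>l. cmod l = 1 \<Longrightarrow> 0 \<le> Re (s + cnj l * b + l * c)"
  shows "cmod (b + cnj c) \<le> Re s"
proof -
  define p where "p = b + cnj c"
  have Re_eq: "Re (s + cnj l * b + l * c) = Re s + Re (cnj l * p)" for l
    by (simp add: p_def algebra_simps)
  have "cmod p \<le> Re s"
  proof (cases "p = 0")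
    case True
    then show ?thesis
      using assms[of 1] Re_eq[of 1] by simp
  next
    case False
    then have "cmod (- sgn p) = 1"
      by (simp add: norm_sgn)
    moreover have "Re (cnj (- sgn p) * p) = - cmod p"
      using cnj_sgn_mult_self[of p] by (simp only: complex_cnj_minus mult_minus_left) simp
    ultimately show ?thesis
      using assms[of "- sgn p"] Re_eq[of "- sgn p"] by linarith
  qed
  then show ?thesis
    by (simp add: p_def)
qed

text \<open>The rays of \<open>w = sin \<alpha> + i cos \<alpha>\<close> and of its conjugate bound the
  dual cone; as \<open>w\<^sup>2 - (cnj w)\<^sup>2 = 4 i sin \<alpha> cos \<alpha>\<close>, combining the two
  estimates isolates b. For \<open>\<alpha> = 0\<close> these rays are \<open>\<plusminus>i\<close>, which only give
  \<open>b = cnj c\<close>, and \<open>w = 1\<close> finishes.\<close>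

lemma cos_mult_cmod_le_Re_if_in_sector:
  assumes "0 \<le> \<alpha>" "\<alpha> < pi / 2"
    and "\<And>l. cmod l = 1 \<Longrightarrow> s + cnj l * b + l * c \<in> insert 0 (sector \<alpha>)"
  shows "2 * cos \<alpha> * cmod b \<le> Re s"
proof -
  have rotated: "cmod (w * b + cnj (w * c)) \<le> Re (w * s)"
    if "\<bar>Im w\<bar> * sin \<alpha> \<le> Re w * cos \<alpha>" for w
  proof (rule cmod_le_Re_if_Re_nonneg_on_circle)
    fix l :: complex assume "cmod l = 1"
    have "0 \<le> Re (w * (s + cnj l * b + l * c))"
      using Re_mult_nonneg_if_in_sector[OF assms(1,2) that assms(3)[OF \<open>cmod l = 1\<close>]] .
    then show "0 \<le> Re (w * s + cnj l * (w * b) + l * (w * c))"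
      by (simp add: algebra_simps)
  qed
  show ?thesis
  proof (cases "\<alpha> = 0")
    case True
    have "\<i> * b + cnj (\<i> * c) = \<i> * (b - cnj c)"
      and "- \<i> * b + cnj (- \<i> * c) = - \<i> * (b - cnj c)"
      by (simp_all add: algebra_simps)
    then have "cmod (b - cnj c) \<le> - Im s" "cmod (b - cnj c) \<le> Im s"
      using rotated[of "\<i>"] rotated[of "- \<i>"] True by (simp_all add: norm_mult)
    then have "b = cnj c"
      by (smt (verit) norm_le_zero_iff right_minus_eq)
    then show ?thesis
      using rotated[of 1] True by (simp add: norm_mult)
  next
    case False
    have sin: "0 < sin \<alpha>"
      using False assms(1,2) by (intro sin_gt_zero) auto
    have cos: "0 < cos \<alpha>"
      using assms(1,2) by (intro cos_gt_zero_pi) auto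
    define w where "w = Complex (sin \<alpha>) (cos \<alpha>)"
    have "cmod w = 1"
      by (simp add: w_def cmod_def)
    have dual: "\<bar>Im w\<bar> * sin \<alpha> \<le> Re w * cos \<alpha>"
      "\<bar>Im (cnj w)\<bar> * sin \<alpha> \<le> Re (cnj w) * cos \<alpha>"
      using cos by (simp_all add: w_def mult.commute)
    have "w * (w * b + cnj (w * c)) - cnj w * (cnj w * b + cnj (cnj w * c))
        = (w\<^sup>2 - (cnj w)\<^sup>2) * b"
      by (simp add: algebra_simps power2_eq_square)
    also have "w\<^sup>2 - (cnj w)\<^sup>2 = \<i> * of_real (4 * sin \<alpha> * cos \<alpha>)"
      by (simp add: w_def complex_eq_iff power2_eq_square)
    finally have "4 * sin \<alpha> * cos \<alpha> * cmod b
          = cmod (w * (w * b + cnj (w * c)) - cnj w * (cnj w * b + cnj (cnj w * c)))"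
      using sin cos by (simp add: norm_mult)
    also have "\<dots> \<le> cmod (w * (w * b + cnj (w * c)))
        + cmod (cnj w * (cnj w * b + cnj (cnj w * c)))"
      by (rule norm_triangle_ineq4)
    also have "\<dots> = cmod (w * b + cnj (w * c)) + cmod (cnj w * b + cnj (cnj w * c))"
      by (simp only: norm_mult complex_mod_cnj \<open>cmod w = 1\<close> mult_1)
    also have "\<dots> \<le> Re (w * s) + Re (cnj w * s)"
      using add_mono[OF rotated[OF dual(1)] rotated[OF dual(2)]] .
    also have "\<dots> = 2 * sin \<alpha> * Re s"
      by (simp add: w_def)
    finally show ?thesis
      using sin by (simp add: algebra_simps)
  qed
qed

text \<open>The form vanishes at \<open>u = 0\<close>, which the open sector excludes.\<close>

lemma quadratic_form_in_sector:
  assumes "A \<in> Pi_s \<alpha>"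
  shows "cinner (A *v u) u \<in> insert 0 (sector \<alpha>)"
proof (cases "u = 0")
  case False
  have "norm (sgn u) = 1"
    using False by (simp add: norm_sgn)
  then have "cinner (A *v sgn u) (sgn u) \<in> sector \<alpha>"
    using assms unfolding Pi_s_def numrange_def by blast
  moreover have "cinner (A *v u) u = of_real ((norm u)\<^sup>2) * cinner (A *v sgn u) (sgn u)"
    using False
    by (simp add: sgn_vec_def linear_cmul[OF matrix_vector_mul_linear] cinner_scaleR_left
        cinner_scaleR_right field_simps power2_eq_square)
  ultimately show ?thesis
    using False
    by (auto simp: sector_def zero_less_mult_iff abs_mult mult_left_mono mult.left_commute)
qed simp

lemma quadratic_form_add_unit_scale:
  assumes "cmod l = 1"
  shows "cinner (A *v (x + l *s y)) (x + l *s y)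
      = (cinner (A *v x) x + cinner (A *v y) y)
        + cnj l * cinner (A *v x) y + l * cinner (A *v y) x"
proof -
  have "l * cnj l = 1"
    using assms complex_norm_square[of l] by simp
  then show ?thesis
    by (simp add: vector_scalar_commute cinner_add_left
        cinner_add_right cinner_scale_left cinner_scale_right algebra_simps)
qed

lemma sectorial_cinner_le:
  assumes "A \<in> Pi_s \<alpha>" "0 \<le> \<alpha>" "\<alpha> < pi / 2"
  shows "2 * cos \<alpha> * cmod (cinner (A *v x) y)
    \<le> Re (cinner (A *v x) x) + Re (cinner (A *v y) y)"
proof -
  have "2 * cos \<alpha> * cmod (cinner (A *v x) y) \<le> Re (cinner (A *v x) x + cinner (A *v y) y)"
  proof (rule cos_mult_cmod_le_Re_if_in_sector[OF assms(2,3)])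
    fix l :: complex assume "cmod l = 1"
    then show "cinner (A *v x) x + cinner (A *v y) y
        + cnj l * cinner (A *v x) y + l * cinner (A *v y) x \<in> insert 0 (sector \<alpha>)"
      using quadratic_form_in_sector[OF assms(1), of "x + l *s y"]
      by (simp only: quadratic_form_add_unit_scale)
  qed
  then show ?thesis
    by simp
qed

lemma sectorial_norm_mult_vec_le_qnumrad:
  fixes A :: "complex ^'n ^'n"
  assumes "CARD('n) \<ge> 2" "0 \<le> \<alpha>" "\<alpha> < pi / 2" "A \<in> Pi_s \<alpha>" "cmod q \<le> 1"
    and "norm x = 1"
  shows "cmod q * cos \<alpha> * norm (A *v x) \<le> qnumrad q A"
proof (cases "A *v x = 0")
  case True
  then show ?thesis
    using qnumrad_ge_quadratic_form[OF assms(1,5,6), of A] by simp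
next
  case False
  have Re_le: "cmod q * Re (cinner (A *v u) u) \<le> qnumrad q A" if "norm u = 1" for u
    using mult_left_mono[OF complex_Re_le_cmod norm_ge_zero[of q]]
      qnumrad_ge_quadratic_form[OF assms(1,5) that]
    by (rule order_trans)
  define y where "y = sgn (A *v x)"
  have "norm y = 1"
    using False by (simp add: y_def norm_sgn)
  have "cinner (A *v x) y = of_real (norm (A *v x))"
    using False by (simp add: y_def sgn_vec_def cinner_scaleR_right cinner_self power2_eq_square)
  then have "2 * cos \<alpha> * norm (A *v x) \<le> Re (cinner (A *v x) x) + Re (cinner (A *v y) y)"
    using sectorial_cinner_le[OF assms(4,2,3), of x y] by simp
  then have "cmod q * (2 * cos \<alpha> * norm (A *v x))
      \<le> cmod q * Re (cinner (A *v x) x) + cmod q * Re (cinner (A *v y) y)"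
    by (metis distrib_left mult_left_mono norm_ge_zero)
  then show ?thesis
    using Re_le[OF assms(6)] Re_le[OF \<open>norm y = 1\<close>] by linarith
qed

lemma sectorial_opnorm_le_qnumrad:
  fixes A :: "complex ^'n ^'n"
  assumes "CARD('n) \<ge> 2" "0 \<le> \<alpha>" "\<alpha> < pi / 2" "A \<in> Pi_s \<alpha>" "0 < cmod q" "cmod q \<le> 1"
  shows "cmod q * cos \<alpha> * opnorm A \<le> qnumrad q A"
proof -
  have "0 < cmod q * cos \<alpha>"
    using assms(2,3,5) by (simp add: cos_gt_zero_pi)
  moreover have "opnorm A \<le> qnumrad q A / (cmod q * cos \<alpha>)"
    using sectorial_norm_mult_vec_le_qnumrad[OF assms(1-4,6)] \<open>0 < cmod q * cos \<alpha>\<close>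
    by (intro opnorm_le_if_unit) (simp add: field_simps)
  ultimately show ?thesis
    by (simp add: field_simps)
qed

lemma opnorm_anticommutator_le: "opnorm (A ** B + B ** A) \<le> 2 * opnorm A * opnorm B"
  using opnorm_add_le[of "A ** B" "B ** A"] opnorm_matrix_mul_le[of A B]
    opnorm_matrix_mul_le[of B A, unfolded mult.commute[of "opnorm B"]]
  by linarith

lemma opnorm_commutator_le: "opnorm (A ** B - B ** A) \<le> 2 * opnorm A * opnorm B"
  using opnorm_diff_le[of "A ** B" "B ** A"] opnorm_matrix_mul_le[of A B]
    opnorm_matrix_mul_le[of B A, unfolded mult.commute[of "opnorm B"]]
  by linarith

lemma sectorial_qnumrad_le_if_opnorm_le:
  fixes A B C :: "complex ^'n ^'n"
  assumes "CARD('n) \<ge> 2" "0 \<le> \<alpha>" "\<alpha> < pi / 2" "A \<in> Pi_s \<alpha>" "0 < cmod q" "cmod q \<le> 1"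
    and "opnorm C \<le> 2 * opnorm A * opnorm B"
  shows "cmod q * qnumrad q C \<le> 2 * (1 / cos \<alpha>) * (qnumrad q A * opnorm B)"
proof -
  have cos: "0 < cos \<alpha>"
    using assms(2,3) by (intro cos_gt_zero_pi) auto
  have "cmod q * qnumrad q C \<le> cmod q * opnorm C"
    using qnumrad_le_opnorm[OF assms(1,6)] by (simp add: mult_left_mono)
  also have "\<dots> \<le> 2 * (cmod q * cos \<alpha> * opnorm A) * opnorm B / cos \<alpha>"
    using mult_left_mono[OF assms(7) norm_ge_zero[of q]] cos by (simp add: field_simps)
  also have "\<dots> \<le> 2 * qnumrad q A * opnorm B / cos \<alpha>"
    using sectorial_opnorm_le_qnumrad[OF assms(1-6)] cos opnorm_nonneg[of B]
    by (intro divide_right_mono mult_right_mono) simp_all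
  finally show ?thesis
    by simp
qed

theorem corollary2p20:
  fixes A B :: "complex ^'n ^'n" and q :: complex and \<alpha> :: real
  assumes "CARD('n) \<ge> 2"
    and "0 \<le> \<alpha>" and "\<alpha> < pi / 2"
    and "A \<in> Pi_s \<alpha>" and "B \<in> Pi_s \<alpha>"
    and "0 < cmod q" and "cmod q \<le> 1"
  shows "cmod q * qnumrad q (A ** B + B ** A)
           \<le> 2 * (1 / cos \<alpha>) * min (qnumrad q A * opnorm B) (qnumrad q B * opnorm A)
       \<and> cmod q * qnumrad q (A ** B - B ** A)
           \<le> 2 * (1 / cos \<alpha>) * min (qnumrad q A * opnorm B) (qnumrad q B * opnorm A)"
proof -
  have "0 < cos \<alpha>"
    using assms(2,3) by (intro cos_gt_zero_pi) auto
  have bound: "cmod q * qnumrad q C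
      \<le> 2 * (1 / cos \<alpha>) * min (qnumrad q A * opnorm B) (qnumrad q B * opnorm A)"
    if "opnorm C \<le> 2 * opnorm A * opnorm B" for C :: "complex ^'n ^'n"
    using sectorial_qnumrad_le_if_opnorm_le[OF assms(1-4,6,7) that]
      sectorial_qnumrad_le_if_opnorm_le[OF assms(1-3,5,6,7), of C A] that \<open>0 < cos \<alpha>\<close>
    by (simp add: min_mult_distrib_left mult.commute)
  show ?thesis
    using bound[OF opnorm_anticommutator_le] bound[OF opnorm_commutator_le] by blast
qed

end
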